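(* For $m\ge1$ let $V_m$ be the generating function of column-convex polygons of width $m$, $$V_m=\sum_{P}\prod_{i=0}^{m}\overline y_i^{\,\overline N_i}\,\overline z_i^{\,\overline S_i}\,\underline y_i^{\,\underline N_i}\,\underline z_i^{\,\underline S_i},$$ the sum being over all column-convex polygons $P$ of width $m$. Regard $V_m$ as a function of $\underline y_m$ (all other variables fixed) and write $V_m(t)$ for $V_m$ with $\underline y_m$ replaced by $t$. Then $$V_1(\underline y_1)=\frac{\overline y_0\underline y_1}{1-\overline y_0\underline y_1},$$ and for $m\ge1$ \begin{align*} V_{m+1}(\underline y_{m+1}) =& \frac{(1-\underline y_m\underline z_m)(1-\overline y_m\overline z_m)\,V_{m}(\underline y_{m+1})}{(1-\underline y_{m+1}\overline y_m)(1-\underline y_{m+1}\underline z_m)(1-\underline y_{m+1}^{-1}\underline y_m)(1-\underline y_{m+1}^{-1}\overline z_m)} \\ & + \frac{(\overline z_m -\underline y_{m+1} \underline y_m \underline z_m)\,V_m(\overline z_m)}{(1-\underline y_{m+1}\underline z_m)(1-\underline y_{m+1}^{-1}\overline z_m)(\underline y_m-\overline z_m)} + \frac{(\underline y_m -\underline y_{m+1} \overline y_m \overline z_m)\,V_m(\underline y_m)}{(1-\underline y_{m+1}\overline y_m)(1-\underline y_{m+1}^{-1}\underline y_m)(\overline z_m-\underline y_m)}. \end{align*}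
   Context: Work on the square lattice; polygons are considered up to translation. A self-avoiding polygon is column-convex if its intersection with every vertical line is connected. A column-convex polygon of width $m$ occupies $m$ consecutive unit columns between the lines $x=0$ and $x=m$. Its boundary is split into two partially directed paths (north, south and east steps) with the same endpoints: the top path, which goes up the left edge and then along the top boundary to the upper-right corner of the last column, and the bottom path, which goes along the bottom boundary from the lower-left corner of the first column and then up the right edge. For $0\le i\le m$, $\overline N_i$ (resp. $\overline S_i$) is the number of north (resp. south) steps of the top path on the line $x=i$, and $\underline N_i$ (resp. $\underline S_i$) the number of north (resp. south) steps of the bottom path on $x=i$ (so $\underline N_0=\underline S_0=\overline N_m=\overline S_m=\overline S_0=\underline S_m=0$). The $\overline y_i,\overline z_i,\underline y_i,\underline z_i$ are indeterminates. *)

theory Defs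
  imports "HOL-Analysis.Analysis"
begin

text \<open>A column-convex polygon of width m, up to translation, is encoded by the
  bottom and top heights (b i, t i) of its columns i = 1..m (column i lies between
  the vertical lines x = i-1 and x = i). Normalisation: b 1 = 0 (vertical
  translation) and b i = t i = 0 outside 1..m. Each column is a nonempty vertical
  segment (b i < t i) and consecutive columns share an edge of positive length
  (this is exactly self-avoidance of the boundary).\<close>

type_synonym ccpoly = "(nat \<Rightarrow> int) \<times> (nat \<Rightarrow> int)"

definition ccp :: "nat \<Rightarrow> ccpoly set" where
  "ccp m = {(b, t). b 1 = 0
     \<and> (\<forall>i. i \<notin> {1..m} \<longrightarrow> b i = 0 \<and> t i = 0)
     \<and> (\<forall>i\<in>{1..m}. b i < t i)
     \<and> (\<forall>i\<in>{1..<m}. max (b i) (b (Suc i)) < min (t i) (t (Suc i)))}"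

text \<open>Step counts on the line x = i of the top path (up the left edge, then along
  the top boundary) and of the bottom path (along the bottom boundary, then up the
  right edge).\<close>

definition Ntop :: "nat \<Rightarrow> ccpoly \<Rightarrow> nat \<Rightarrow> nat" where
  "Ntop m P i = (let b = fst P; t = snd P in
     if i = 0 then nat (t 1 - b 1) else if i < m then nat (t (Suc i) - t i) else 0)"

definition Stop :: "nat \<Rightarrow> ccpoly \<Rightarrow> nat \<Rightarrow> nat" where
  "Stop m P i = (let t = snd P in
     if 0 < i \<and> i < m then nat (t i - t (Suc i)) else 0)"

definition Nbot :: "nat \<Rightarrow> ccpoly \<Rightarrow> nat \<Rightarrow> nat" where
  "Nbot m P i = (let b = fst P; t = snd P in
     if 0 < i \<and> i < m then nat (b (Suc i) - b i)
     else if i = m then nat (t m - b m) else 0)"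

definition Sbot :: "nat \<Rightarrow> ccpoly \<Rightarrow> nat \<Rightarrow> nat" where
  "Sbot m P i = (let b = fst P in
     if 0 < i \<and> i < m then nat (b i - b (Suc i)) else 0)"

definition ccweight ::
  "nat \<Rightarrow> (nat \<Rightarrow> complex) \<Rightarrow> (nat \<Rightarrow> complex) \<Rightarrow> (nat \<Rightarrow> complex) \<Rightarrow> (nat \<Rightarrow> complex)
   \<Rightarrow> ccpoly \<Rightarrow> complex" where
  "ccweight m yt zt yb zb P =
     (\<Prod>i\<in>{0..m}. yt i ^ Ntop m P i * zt i ^ Stop m P i * yb i ^ Nbot m P i * zb i ^ Sbot m P i)"

text \<open>Generating function V_m, evaluated at complex values of the indeterminates
  (yt = overline y, zt = overline z, yb = underline y, zb = underline z).\<close>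

definition Vgf ::
  "nat \<Rightarrow> (nat \<Rightarrow> complex) \<Rightarrow> (nat \<Rightarrow> complex) \<Rightarrow> (nat \<Rightarrow> complex) \<Rightarrow> (nat \<Rightarrow> complex) \<Rightarrow> complex" where
  "Vgf m yt zt yb zb = infsum (ccweight m yt zt yb zb) (ccp m)"

end

theory Submission
  imports Defs
begin

(* Deleting the last column of a polygon of width m + 1 leaves a polygon of width m, and the
   deleted column [u, w] may be any column overlapping the previous column [B, T]. The weight
   factorizes accordingly, and the factor of the last column is a product of geometric terms in u
   and w. Summing it over all admissible (u, w) (geometric series where the new column sticks out
   beyond [B, T], finite geometric sums where it does not) gives a combination of y^h, zt_m^h and
   yb_m^h, where h = T - B is the height of column m. As yb_m^h is exactly the factor of the right
   edge in the weight of the width-m polygon, summing over all such polygons turns these three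
   terms into V_m evaluated at yb_m := y, zt_m, yb_m. Absolute convergence for variables in the
   open unit disc follows from the same decomposition, bounding the column factor by
   r^|u - B| * r^|w - T|. *)

section \<open>Geometric sums\<close>

lemma has_sum_power_int_atLeast:
  fixes z :: "'a::{real_normed_field, banach}"
  assumes "norm z < 1"
  shows "((\<lambda>n::int. z ^ nat (n - k)) has_sum 1 / (1 - z)) {k..}"
proof -
  have "((\<lambda>n::nat. z ^ n) has_sum 1 / (1 - z)) UNIV"
    using assms
    by (intro norm_summable_imp_has_sum) (auto simp: norm_power intro!: summable_geometric geometric_sums)
  also have "?this \<longleftrightarrow> ?thesis"
    by (rule has_sum_reindex_bij_witness[of _ "\<lambda>n. nat (n - k)" "\<lambda>i. k + int i"]) auto
  finally show ?thesis .
qed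

lemma has_sum_power_int_lessThan:
  fixes z :: "'a::{real_normed_field, banach}"
  assumes "norm z < 1"
  shows "((\<lambda>n::int. z ^ nat (k - n)) has_sum z / (1 - z)) {..<k}"
proof -
  have "((\<lambda>n::nat. z ^ n) has_sum z / (1 - z)) {1..}"
    by (rule has_sum_geometric_from_1[OF assms])
  also have "?this \<longleftrightarrow> ?thesis"
    by (rule has_sum_reindex_bij_witness[of _ "\<lambda>n. nat (k - n)" "\<lambda>i. k - int i"]) auto
  finally show ?thesis .
qed

lemma has_sum_power_nat_abs_diff:
  fixes r :: real
  assumes "0 \<le> r" "r < 1"
  shows "((\<lambda>n::int. r ^ nat \<bar>n - c\<bar>) has_sum (1 + r) / (1 - r)) UNIV"
proof -
  have "((\<lambda>n::int. r ^ nat \<bar>n - c\<bar>) has_sum 1 / (1 - r)) {c..}"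
    using has_sum_power_int_atLeast[of r c] assms by (subst has_sum_cong) auto
  moreover have "((\<lambda>n::int. r ^ nat \<bar>n - c\<bar>) has_sum r / (1 - r)) {..<c}"
    using has_sum_power_int_lessThan[of r c] assms by (subst has_sum_cong) auto
  ultimately have "((\<lambda>n::int. r ^ nat \<bar>n - c\<bar>) has_sum 1 / (1 - r) + r / (1 - r)) ({c..} \<union> {..<c})"
    by (rule has_sum_Un_disjoint) auto
  moreover have "{c..} \<union> {..<c} = UNIV" by auto
  ultimately show ?thesis by (simp add: add_divide_distrib)
qed

lemma has_sum_product_nonneg:
  fixes f g :: "_ \<Rightarrow> real"
  assumes f: "(f has_sum S) A" and g: "(g has_sum T) B"
    and "\<And>x. x \<in> A \<Longrightarrow> 0 \<le> f x" "\<And>y. y \<in> B \<Longrightarrow> 0 \<le> g y"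
  shows "((\<lambda>(x, y). f x * g y) has_sum S * T) (A \<times> B)"
proof -
  have fibers: "((\<lambda>y. f x * g y) has_sum f x * T) B" for x
    by (rule has_sum_cmult_right[OF g])
  have "(\<lambda>(x, y). f x * g y) summable_on A \<times> B"
    by (rule summable_on_SigmaI[OF _ summable_on_cmult_left[OF has_sum_imp_summable[OF f]]])
       (use fibers assms in auto)
  then show ?thesis
    by (intro has_sum_SigmaI[OF _ has_sum_cmult_left[OF f]]) (use fibers in auto)
qed

lemma has_sum_power_nat_abs_diff_pair:
  fixes r :: real
  assumes "0 \<le> r" "r < 1"
  shows "((\<lambda>(u::int, w::int). r ^ nat \<bar>u - B\<bar> * r ^ nat \<bar>w - T\<bar>) has_sum ((1 + r) / (1 - r))\<^sup>2) UNIV"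
  using has_sum_product_nonneg[OF has_sum_power_nat_abs_diff has_sum_power_nat_abs_diff] assms
  by (simp add: power2_eq_square)

lemma norm_mult_less_one:
  fixes x y :: "'a::real_normed_div_algebra"
  assumes "norm x < 1" "norm y \<le> 1"
  shows "norm (x * y) < 1"
proof -
  have "norm x * norm y \<le> norm x"
    using assms by (intro mult_left_le) auto
  then show ?thesis
    using assms by (simp add: norm_mult)
qed

lemma sum_power_mult_power_lessThan:
  fixes x z :: "'a::comm_ring_1"
  shows "(x - z) * (\<Sum>i<k. z ^ i * x ^ (k - i)) = x * (x ^ k - z ^ k)"
proof (induction k)
  case 0
  then show ?case by simp
next
  case (Suc k)
  have "(\<Sum>i<Suc k. z ^ i * x ^ (Suc k - i)) = x * (\<Sum>i<k. z ^ i * x ^ (k - i)) + z ^ k * x"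
    by (simp add: sum_distrib_left Suc_diff_le mult_ac)
  then have "(x - z) * (\<Sum>i<Suc k. z ^ i * x ^ (Suc k - i))
      = x * ((x - z) * (\<Sum>i<k. z ^ i * x ^ (k - i))) + (x - z) * z ^ k * x"
    by (simp add: algebra_simps)
  also have "\<dots> = x * (x * (x ^ k - z ^ k)) + (x - z) * z ^ k * x"
    by (simp only: Suc.IH)
  finally show ?case
    by (simp add: algebra_simps)
qed

lemma sum_power_mult_power_atLeastLessThan:
  fixes x z :: "'a::comm_ring_1"
  assumes "1 \<le> h"
  shows "(x - z) * (\<Sum>i\<in>{1..<h}. z ^ (h - i) * x ^ i) = z * x ^ h - x * z ^ h"
  using assms
proof (induction h rule: dec_induct)
  case base
  then show ?case by simp
next
  case (step h)
  have "(\<Sum>i\<in>{1..<Suc h}. z ^ (Suc h - i) * x ^ i) = z * (\<Sum>i\<in>{1..<h}. z ^ (h - i) * x ^ i) + z * x ^ h"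
    using step.hyps by (simp add: sum_distrib_left Suc_diff_le mult_ac)
  then have "(x - z) * (\<Sum>i\<in>{1..<Suc h}. z ^ (Suc h - i) * x ^ i)
      = z * ((x - z) * (\<Sum>i\<in>{1..<h}. z ^ (h - i) * x ^ i)) + (x - z) * z * x ^ h"
    by (simp add: algebra_simps)
  also have "\<dots> = z * (z * x ^ h - x * z ^ h) + (x - z) * z * x ^ h"
    by (simp only: step.IH)
  finally show ?case
    by (simp add: algebra_simps)
qed

section \<open>Summing over the last column\<close>

(* The weight of the steps on the line x = m when the column [B, T] is followed by the column
   [u, w]: a, b, g, d stand for yt m, zt m, yb m, zb m (north and south steps of the top and of the
   bottom path), and y for yb (m + 1), which weighs the new right edge. *)
definition column_weight :: "'a \<Rightarrow> 'a \<Rightarrow> 'a \<Rightarrow> 'a \<Rightarrow> 'a \<Rightarrow> int \<Rightarrow> int \<Rightarrow> int \<times> int \<Rightarrow> 'a::comm_ring_1"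
  where "column_weight a b g d y B T = (\<lambda>(u, w).
    a ^ nat (w - T) * b ^ nat (T - w) * g ^ nat (u - B) * d ^ nat (B - u) * y ^ nat (w - u))"

definition admissible_columns :: "int \<Rightarrow> int \<Rightarrow> (int \<times> int) set"
  where "admissible_columns B T = {(u, w). max B u < min T w}"

lemma norm_column_weight_le:
  fixes a b g d y :: "'a::real_normed_field"
  assumes "norm a \<le> r" "norm b \<le> r" "norm g \<le> r" "norm d \<le> r" "norm y \<le> 1"
  shows "norm (column_weight a b g d y B T (u, w)) \<le> r ^ nat \<bar>u - B\<bar> * r ^ nat \<bar>w - T\<bar>"
proof -
  have r: "0 \<le> r" using assms(1) norm_ge_zero order_trans by blast
  have "norm (column_weight a b g d y B T (u, w))
      = norm a ^ nat (w - T) * norm b ^ nat (T - w) * norm g ^ nat (u - B) * norm d ^ nat (B - u)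
        * norm y ^ nat (w - u)"
    by (simp add: column_weight_def norm_mult norm_power)
  also have "\<dots> \<le> r ^ nat (w - T) * r ^ nat (T - w) * r ^ nat (u - B) * r ^ nat (B - u) * 1"
    by (intro mult_mono power_mono power_le_one) (use assms r in auto)
  also have "\<dots> = r ^ (nat (u - B) + nat (B - u)) * r ^ (nat (w - T) + nat (T - w))"
    by (simp add: power_add mult_ac)
  also have "nat (u - B) + nat (B - u) = nat \<bar>u - B\<bar>"
    by auto
  also have "nat (w - T) + nat (T - w) = nat \<bar>w - T\<bar>"
    by auto
  finally show ?thesis .
qed

lemma summable_on_column_weight:
  fixes a b g d y :: "'a::{real_normed_field, banach}"
  assumes "norm a < 1" "norm b < 1" "norm g < 1" "norm d < 1" "norm y \<le> 1"
  shows "column_weight a b g d y B T summable_on X"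
proof -
  define r where "r = max (max (norm a) (norm b)) (max (norm g) (norm d))"
  have r: "0 \<le> r" "r < 1"
    using assms by (auto simp: r_def le_max_iff_disj)
  have "(\<lambda>x. norm (column_weight a b g d y B T x)) summable_on UNIV"
  proof (rule Infinite_Sum.abs_summable_on_comparison_test')
    show "(\<lambda>(u, w). r ^ nat \<bar>u - B\<bar> * r ^ nat \<bar>w - T\<bar>) summable_on UNIV"
      using has_sum_power_nat_abs_diff_pair[OF r] by (rule has_sum_imp_summable)
    show "norm (column_weight a b g d y B T x) \<le> (case x of (u, w) \<Rightarrow> r ^ nat \<bar>u - B\<bar> * r ^ nat \<bar>w - T\<bar>)"
      for x
    proof (cases x)
      case (Pair u w)
      have "norm a \<le> r" "norm b \<le> r" "norm g \<le> r" "norm d \<le> r"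
        by (simp_all add: r_def)
      then show ?thesis
        using norm_column_weight_le[of a r b g d y B T u w] assms(5) Pair by simp
    qed
  qed
  then have "column_weight a b g d y B T summable_on UNIV"
    by (rule abs_summable_summable)
  then show ?thesis
    by (rule summable_on_subset_banach) simp
qed

lemma has_sum_column_weight_shift:
  assumes "(column_weight a b g d y 0 (T - B) has_sum S) (admissible_columns 0 (T - B))"
  shows "(column_weight a b g d y B T has_sum S) (admissible_columns B T)"
proof -
  let ?shift = "\<lambda>(u, w). (u + B, w + B)"
  have bij: "bij_betw ?shift (admissible_columns 0 (T - B)) (admissible_columns B T)"
    by (rule bij_betwI[where g = "\<lambda>(u, w). (u - B, w - B)"]) (auto simp: admissible_columns_def)
  have shifted: "column_weight a b g d y B T (?shift x) = column_weight a b g d y 0 (T - B) x" for x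
    by (cases x) (simp add: column_weight_def algebra_simps)
  have "((\<lambda>x. column_weight a b g d y B T (?shift x)) has_sum S) (admissible_columns 0 (T - B))"
    using assms by (simp only: shifted)
  then show ?thesis
    by (simp only: has_sum_reindex_bij_betw[OF bij])
qed

lemma has_sum_lower_column:
  fixes g d y :: "'a::{real_normed_field, banach}"
  assumes "norm (d * y) < 1" "y \<noteq> g"
  shows "((\<lambda>u::int. g ^ nat u * d ^ nat (- u) * y ^ nat (int k - u)) has_sum
           (d * y / (1 - d * y) + y / (y - g)) * y ^ k + (- y / (y - g)) * g ^ k) {..<int k}"
proof -
  let ?f = "\<lambda>u::int. g ^ nat u * d ^ nat (- u) * y ^ nat (int k - u)"
  have "((\<lambda>u::int. y ^ k * (d * y) ^ nat (0 - u)) has_sum y ^ k * (d * y / (1 - d * y))) {..<0}"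
    by (rule has_sum_cmult_right[OF has_sum_power_int_lessThan[OF assms(1)]])
  also have "?this \<longleftrightarrow> (?f has_sum y ^ k * (d * y / (1 - d * y))) {..<0}"
  proof (rule has_sum_cong)
    fix u :: int
    assume "u \<in> {..<0}"
    then have "nat (int k - u) = k + nat (- u)" "nat u = 0"
      by auto
    then show "y ^ k * (d * y) ^ nat (0 - u) = ?f u"
      by (simp add: power_add power_mult_distrib mult_ac)
  qed
  finally have below_0: "(?f has_sum y ^ k * (d * y / (1 - d * y))) {..<0}" .
  have "(\<Sum>u\<in>{0..<int k}. ?f u) = (\<Sum>i<k. g ^ i * y ^ (k - i))"
    by (simp add: image_atLeastZeroLessThan_int sum.reindex nat_diff_distrib)
  also have "\<dots> = y * (y ^ k - g ^ k) / (y - g)"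
    using sum_power_mult_power_lessThan[of y g k] assms(2) by (simp add: eq_divide_eq mult.commute)
  finally have above_0: "(?f has_sum y * (y ^ k - g ^ k) / (y - g)) {0..<int k}"
    by (intro has_sum_finiteI) simp_all
  have "(?f has_sum y ^ k * (d * y / (1 - d * y)) + y * (y ^ k - g ^ k) / (y - g)) ({..<0} \<union> {0..<int k})"
    by (rule has_sum_Un_disjoint[OF below_0 above_0]) auto
  moreover have "{..<0} \<union> {0..<int k} = {..<int k}"
    by auto
  ultimately show ?thesis
    by (simp add: algebra_simps diff_divide_distrib)
qed

lemma has_sum_column_weight_top_above:
  fixes a b g d y :: "'a::{real_normed_field, banach}"
  assumes "norm a < 1" "norm b < 1" "norm g < 1" "norm d < 1" "norm y < 1"
    and lower: "((\<lambda>u::int. g ^ nat u * d ^ nat (- u) * y ^ nat (int h - u)) has_sum L) {..<int h}"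
  shows "(column_weight a b g d y 0 (int h) has_sum L / (1 - a * y)) ({..<int h} \<times> {int h..})"
proof -
  let ?f = "\<lambda>u::int. g ^ nat u * d ^ nat (- u) * y ^ nat (int h - u)"
  have ay: "norm (a * y) < 1"
    using assms(1,5) by (simp add: norm_mult_less_one)
  have "(column_weight a b g d y 0 (int h) has_sum L * (1 / (1 - a * y))) ({..<int h} \<times> {int h..})"
  proof (rule has_sum_SigmaI)
    fix u
    assume u: "u \<in> {..<int h}"
    have "((\<lambda>w. ?f u * (a * y) ^ nat (w - int h)) has_sum ?f u * (1 / (1 - a * y))) {int h..}"
      by (rule has_sum_cmult_right[OF has_sum_power_int_atLeast[OF ay]])
    also have "?this \<longleftrightarrow> ((\<lambda>w. column_weight a b g d y 0 (int h) (u, w)) has_sum ?f u * (1 / (1 - a * y))) {int h..}"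
    proof (rule has_sum_cong)
      fix w
      assume "w \<in> {int h..}"
      then have "nat (w - u) = nat (int h - u) + nat (w - int h)" "nat (int h - w) = 0"
        using u by auto
      then show "?f u * (a * y) ^ nat (w - int h) = column_weight a b g d y 0 (int h) (u, w)"
        by (simp add: column_weight_def power_add power_mult_distrib mult_ac)
    qed
    finally show "((\<lambda>w. column_weight a b g d y 0 (int h) (u, w)) has_sum ?f u * (1 / (1 - a * y))) {int h..}" .
  next
    show "((\<lambda>u. ?f u * (1 / (1 - a * y))) has_sum L * (1 / (1 - a * y))) {..<int h}"
      by (rule has_sum_cmult_left[OF lower])
  next
    show "column_weight a b g d y 0 (int h) summable_on {..<int h} \<times> {int h..}"
      using assms by (intro summable_on_column_weight) auto
  qed
  then show ?thesis
    by simp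
qed

lemma has_sum_column_weight_top_below:
  fixes a b g d y :: "'a::{real_normed_field, banach}"
  assumes "norm a < 1" "norm b < 1" "norm g < 1" "norm d < 1" "norm y < 1"
    and lower: "\<And>k. ((\<lambda>u::int. g ^ nat u * d ^ nat (- u) * y ^ nat (int k - u)) has_sum L k) {..<int k}"
  shows "(column_weight a b g d y 0 (int h) has_sum (\<Sum>k\<in>{1..<h}. b ^ (h - k) * L k))
           {(u, w). 0 < w \<and> w < int h \<and> u < w}"
proof -
  let ?A = "SIGMA w:{0<..<int h}. {..<w}"
  have bij: "bij_betw prod.swap ?A {(u, w). 0 < w \<and> w < int h \<and> u < w}"
    by (rule bij_betwI[where g = prod.swap]) auto
  have "((\<lambda>x. column_weight a b g d y 0 (int h) (prod.swap x)) has_sum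
          (\<Sum>w\<in>{0<..<int h}. b ^ nat (int h - w) * L (nat w))) ?A"
  proof (rule has_sum_SigmaI)
    fix w :: int
    assume w: "w \<in> {0<..<int h}"
    have "((\<lambda>u. b ^ nat (int h - w) * (g ^ nat u * d ^ nat (- u) * y ^ nat (int (nat w) - u))) has_sum
            b ^ nat (int h - w) * L (nat w)) {..<int (nat w)}"
      by (rule has_sum_cmult_right[OF lower])
    moreover have "column_weight a b g d y 0 (int h) (u, w)
        = b ^ nat (int h - w) * (g ^ nat u * d ^ nat (- u) * y ^ nat (int (nat w) - u))" for u
      using w by (simp add: column_weight_def mult_ac)
    ultimately show "((\<lambda>u. column_weight a b g d y 0 (int h) (prod.swap (w, u))) has_sum
            b ^ nat (int h - w) * L (nat w)) {..<w}"
      using w by simp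
  next
    show "((\<lambda>w. b ^ nat (int h - w) * L (nat w)) has_sum
            (\<Sum>w\<in>{0<..<int h}. b ^ nat (int h - w) * L (nat w))) {0<..<int h}"
      by (rule has_sum_finiteI) auto
  next
    show "(\<lambda>x. column_weight a b g d y 0 (int h) (prod.swap x)) summable_on ?A"
      using assms by (simp add: summable_on_reindex_bij_betw[OF bij] summable_on_column_weight)
  qed
  moreover have "(\<Sum>w\<in>{0<..<int h}. b ^ nat (int h - w) * L (nat w)) = (\<Sum>k\<in>{1..<h}. b ^ (h - k) * L k)"
  proof -
    have "{0<..<int h} = int ` {1..<h}"
      by (auto simp: image_int_atLeastLessThan)
    then show ?thesis
      by (simp add: sum.reindex nat_diff_distrib)
  qed
  ultimately show ?thesis
    by (simp add: has_sum_reindex_bij_betw[OF bij])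
qed

(* Y, B, G stand for V_m evaluated at yb_m := y, b, g. *)
definition recursion_rhs :: "'a \<Rightarrow> 'a \<Rightarrow> 'a \<Rightarrow> 'a \<Rightarrow> 'a \<Rightarrow> 'a \<Rightarrow> 'a \<Rightarrow> 'a \<Rightarrow> 'a::field" where
  "recursion_rhs a b g d y Y B G =
     (1 - g * d) * (1 - a * b) * Y
       / ((1 - y * a) * (1 - y * d) * (1 - inverse y * g) * (1 - inverse y * b))
   + (b - y * g * d) * B / ((1 - y * d) * (1 - inverse y * b) * (g - b))
   + (g - y * a * b) * G / ((1 - y * a) * (1 - inverse y * g) * (b - g))"

lemma recursion_rhs_cmult:
  "c * recursion_rhs a b g d y Y B G = recursion_rhs a b g d y (c * Y) (c * B) (c * G)"
  by (simp add: recursion_rhs_def distrib_left mult.left_commute)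

lemma has_sum_recursion_rhs:
  fixes f1 f2 f3 :: "_ \<Rightarrow> 'a::{real_normed_field, banach}"
  assumes "(f1 has_sum S1) A" "(f2 has_sum S2) A" "(f3 has_sum S3) A"
  shows "((\<lambda>x. recursion_rhs a b g d y (f1 x) (f2 x) (f3 x)) has_sum recursion_rhs a b g d y S1 S2 S3) A"
  unfolding recursion_rhs_def
  by (intro has_sum_add has_sum_divide_const has_sum_cmult_right assms)

lemma recursion_rhs_partial_fractions:
  fixes a b g d y Y B G :: "'a::field"
  assumes "y \<noteq> 0" "y \<noteq> g" "y \<noteq> b" "g \<noteq> b" "a * y \<noteq> 1" "d * y \<noteq> 1"
  defines "A \<equiv> d * y / (1 - d * y) + y / (y - g)" and "C \<equiv> - y / (y - g)"
  shows "(A * Y + C * G) / (1 - a * y) + A * ((b * Y - y * B) / (y - b)) + C * ((b * G - g * B) / (g - b))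
     = recursion_rhs a b g d y Y B G"
proof -
  have "y - g \<noteq> 0" "y - b \<noteq> 0" "g - b \<noteq> 0" "b - g \<noteq> 0"
    "1 - a * y \<noteq> 0" "1 - d * y \<noteq> 0" "1 - y * a \<noteq> 0" "1 - y * d \<noteq> 0"
    using assms by (auto simp: mult.commute)
  with assms(1) show ?thesis
    unfolding recursion_rhs_def A_def C_def by (simp add: divide_simps) algebra
qed

lemma has_sum_column_weight:
  fixes a b g d y :: "'a::{real_normed_field, banach}"
  assumes norms: "norm a < 1" "norm b < 1" "norm g < 1" "norm d < 1" "norm y < 1"
    and "y \<noteq> 0" "y \<noteq> g" "y \<noteq> b" "g \<noteq> b" "B < T"
  shows "(column_weight a b g d y B T has_sum
           recursion_rhs a b g d y (y ^ nat (T - B)) (b ^ nat (T - B)) (g ^ nat (T - B)))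
         (admissible_columns B T)"
proof (rule has_sum_column_weight_shift)
  define h where "h = nat (T - B)"
  have h: "1 \<le> h" "T - B = int h"
    using \<open>B < T\<close> by (auto simp: h_def)
  have "a * y \<noteq> 1" "d * y \<noteq> 1"
    using norm_mult_less_one[of a y] norm_mult_less_one[of d y] norms by auto
  define A where "A = d * y / (1 - d * y) + y / (y - g)"
  define C where "C = - y / (y - g)"
  define L where "L k = A * y ^ k + C * g ^ k" for k
  have lower: "((\<lambda>u::int. g ^ nat u * d ^ nat (- u) * y ^ nat (int k - u)) has_sum L k) {..<int k}" for k
    unfolding L_def A_def C_def
    by (rule has_sum_lower_column) (use norms norm_mult_less_one[of d y] \<open>y \<noteq> g\<close> in auto)
  have high: "(column_weight a b g d y 0 (int h) has_sum L h / (1 - a * y)) ({..<int h} \<times> {int h..})"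
    by (rule has_sum_column_weight_top_above[OF norms lower])
  have low: "(column_weight a b g d y 0 (int h) has_sum (\<Sum>k\<in>{1..<h}. b ^ (h - k) * L k))
               {(u, w). 0 < w \<and> w < int h \<and> u < w}"
    by (rule has_sum_column_weight_top_below[OF norms lower])
  have geometric: "(\<Sum>k\<in>{1..<h}. b ^ (h - k) * x ^ k) = (b * x ^ h - x * b ^ h) / (x - b)"
    if "x \<noteq> b" for x
    using sum_power_mult_power_atLeastLessThan[OF h(1), of x b] that by (simp add: eq_divide_eq mult.commute)
  have "(\<Sum>k\<in>{1..<h}. b ^ (h - k) * L k)
      = A * (\<Sum>k\<in>{1..<h}. b ^ (h - k) * y ^ k) + C * (\<Sum>k\<in>{1..<h}. b ^ (h - k) * g ^ k)"
    by (simp add: L_def distrib_left sum.distrib sum_distrib_left mult.left_commute)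
  also have "\<dots> = A * ((b * y ^ h - y * b ^ h) / (y - b)) + C * ((b * g ^ h - g * b ^ h) / (g - b))"
    by (simp only: geometric[OF \<open>y \<noteq> b\<close>] geometric[OF \<open>g \<noteq> b\<close>])
  finally have low_value: "(\<Sum>k\<in>{1..<h}. b ^ (h - k) * L k)
      = A * ((b * y ^ h - y * b ^ h) / (y - b)) + C * ((b * g ^ h - g * b ^ h) / (g - b))" .
  have split: "admissible_columns 0 (int h)
      = {..<int h} \<times> {int h..} \<union> {(u, w). 0 < w \<and> w < int h \<and> u < w}"
    using h(1) by (auto simp: admissible_columns_def)
  have "(column_weight a b g d y 0 (int h) has_sum L h / (1 - a * y) + (\<Sum>k\<in>{1..<h}. b ^ (h - k) * L k))
      (admissible_columns 0 (int h))"
    unfolding split by (rule has_sum_Un_disjoint[OF high low]) auto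
  also have "L h / (1 - a * y) + (\<Sum>k\<in>{1..<h}. b ^ (h - k) * L k) = recursion_rhs a b g d y (y ^ h) (b ^ h) (g ^ h)"
    unfolding low_value
    unfolding L_def A_def C_def add.assoc[symmetric]
    by (rule recursion_rhs_partial_fractions) (use assms \<open>a * y \<noteq> 1\<close> \<open>d * y \<noteq> 1\<close> in auto)
  finally show "(column_weight a b g d y 0 (T - B) has_sum
      recursion_rhs a b g d y (y ^ nat (T - B)) (b ^ nat (T - B)) (g ^ nat (T - B))) (admissible_columns 0 (T - B))"
    by (simp only: h(2) nat_int)
qed

section \<open>Polygon weights\<close>

(* ccweight over an arbitrary commutative ring, so that it can also be evaluated at the norms of
   the variables. *)
definition polygon_weight ::
  "nat \<Rightarrow> (nat \<Rightarrow> 'a::comm_ring_1) \<Rightarrow> (nat \<Rightarrow> 'a) \<Rightarrow> (nat \<Rightarrow> 'a) \<Rightarrow> (nat \<Rightarrow> 'a) \<Rightarrow> ccpoly \<Rightarrow> 'a" where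
  "polygon_weight m yt zt yb zb P =
     (\<Prod>i\<in>{0..m}. yt i ^ Ntop m P i * zt i ^ Stop m P i * yb i ^ Nbot m P i * zb i ^ Sbot m P i)"

definition prefix_weight ::
  "nat \<Rightarrow> (nat \<Rightarrow> 'a::comm_ring_1) \<Rightarrow> (nat \<Rightarrow> 'a) \<Rightarrow> (nat \<Rightarrow> 'a) \<Rightarrow> (nat \<Rightarrow> 'a) \<Rightarrow> ccpoly \<Rightarrow> 'a" where
  "prefix_weight m yt zt yb zb P =
     (\<Prod>i<m. yt i ^ Ntop m P i * zt i ^ Stop m P i * yb i ^ Nbot m P i * zb i ^ Sbot m P i)"

lemma Vgf_eq_infsum_polygon_weight: "Vgf m yt zt yb zb = infsum (polygon_weight m yt zt yb zb) (ccp m)"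
  unfolding Vgf_def ccweight_def[abs_def] polygon_weight_def ..

lemma polygon_weight_fun_upd:
  assumes "1 \<le> m"
  shows "polygon_weight m yt zt (yb(m := s)) zb P = prefix_weight m yt zt yb zb P * s ^ nat (snd P m - fst P m)"
proof -
  have "{0..m} = insert m {..<m}"
    by auto
  moreover have "Ntop m P m = 0" "Stop m P m = 0" "Sbot m P m = 0" "Nbot m P m = nat (snd P m - fst P m)"
    using assms by (auto simp: Ntop_def Stop_def Sbot_def Nbot_def Let_def)
  moreover have "prefix_weight m yt zt (yb(m := s)) zb P = prefix_weight m yt zt yb zb P"
    unfolding prefix_weight_def by (intro prod.cong) auto
  ultimately show ?thesis
    by (simp add: polygon_weight_def prefix_weight_def mult.commute)
qed

definition add_column :: "nat \<Rightarrow> ccpoly \<times> (int \<times> int) \<Rightarrow> ccpoly" where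
  "add_column m = (\<lambda>((b, t), (u, w)). (b(Suc m := u), t(Suc m := w)))"

lemma bij_betw_add_column:
  assumes "1 \<le> m"
  shows "bij_betw (add_column m) (SIGMA P:ccp m. admissible_columns (fst P m) (snd P m)) (ccp (Suc m))"
proof (rule bij_betw_byWitness[where f' = "\<lambda>(b, t). ((b(Suc m := 0), t(Suc m := 0)), (b (Suc m), t (Suc m)))"])
  show "\<forall>x\<in>SIGMA P:ccp m. admissible_columns (fst P m) (snd P m).
      (\<lambda>(b, t). ((b(Suc m := 0), t(Suc m := 0)), (b (Suc m), t (Suc m)))) (add_column m x) = x"
    by (auto simp: add_column_def ccp_def)
  show "\<forall>Q\<in>ccp (Suc m). add_column m ((\<lambda>(b, t). ((b(Suc m := 0), t(Suc m := 0)), (b (Suc m), t (Suc m)))) Q) = Q"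
    by (auto simp: add_column_def)
  show "add_column m ` (SIGMA P:ccp m. admissible_columns (fst P m) (snd P m)) \<subseteq> ccp (Suc m)"
    using assms by (auto simp: add_column_def ccp_def admissible_columns_def less_Suc_eq_le)
  show "(\<lambda>(b, t). ((b(Suc m := 0), t(Suc m := 0)), (b (Suc m), t (Suc m)))) ` ccp (Suc m)
      \<subseteq> (SIGMA P:ccp m. admissible_columns (fst P m) (snd P m))"
    using assms by (auto simp: ccp_def admissible_columns_def)
qed

lemma polygon_weight_add_column:
  assumes "1 \<le> m"
  shows "polygon_weight (Suc m) yt zt yb zb (add_column m (P, x))
    = prefix_weight m yt zt yb zb P * column_weight (yt m) (zt m) (yb m) (zb m) (yb (Suc m)) (fst P m) (snd P m) x"
proof -
  obtain b t u w where P: "P = (b, t)" and x: "x = (u, w)"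
    by (cases P, cases x)
  define Q where "Q = add_column m (P, x)"
  have Q: "Q = (b(Suc m := u), t(Suc m := w))"
    by (simp add: Q_def add_column_def P x)
  let ?f = "\<lambda>i. yt i ^ Ntop (Suc m) Q i * zt i ^ Stop (Suc m) Q i * yb i ^ Nbot (Suc m) Q i * zb i ^ Sbot (Suc m) Q i"
  have "{0..Suc m} = insert (Suc m) (insert m {..<m})"
    by auto
  then have "polygon_weight (Suc m) yt zt yb zb Q = (\<Prod>i<m. ?f i) * ?f m * ?f (Suc m)"
    by (simp add: polygon_weight_def mult_ac)
  also have "(\<Prod>i<m. ?f i) = prefix_weight m yt zt yb zb P"
    unfolding prefix_weight_def
  proof (intro prod.cong refl)
    fix i
    assume "i \<in> {..<m}"
    then have "Ntop (Suc m) Q i = Ntop m P i" "Stop (Suc m) Q i = Stop m P i"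
      "Nbot (Suc m) Q i = Nbot m P i" "Sbot (Suc m) Q i = Sbot m P i"
      using assms by (auto simp: Q P Ntop_def Stop_def Nbot_def Sbot_def Let_def)
    then show "?f i = yt i ^ Ntop m P i * zt i ^ Stop m P i * yb i ^ Nbot m P i * zb i ^ Sbot m P i"
      by simp
  qed
  also have "?f m = yt m ^ nat (w - t m) * zt m ^ nat (t m - w) * yb m ^ nat (u - b m) * zb m ^ nat (b m - u)"
    using assms by (simp add: Q Ntop_def Stop_def Nbot_def Sbot_def Let_def)
  also have "?f (Suc m) = yb (Suc m) ^ nat (w - u)"
    by (simp add: Q Ntop_def Stop_def Nbot_def Sbot_def Let_def)
  finally show ?thesis
    by (simp add: Q_def P x column_weight_def mult_ac)
qed

lemma has_sum_polygon_weight_1: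
  fixes yt zt yb zb :: "nat \<Rightarrow> 'a::{real_normed_field, banach}"
  assumes "norm (yt 0 * yb 1) < 1"
  shows "(polygon_weight 1 yt zt yb zb has_sum yt 0 * yb 1 / (1 - yt 0 * yb 1)) (ccp 1)"
proof -
  let ?column = "\<lambda>n::nat. ((\<lambda>_. 0) :: nat \<Rightarrow> int, (\<lambda>_. 0)(1 := int n))"
  have "((\<lambda>n. (yt 0 * yb 1) ^ n) has_sum yt 0 * yb 1 / (1 - yt 0 * yb 1)) {1..}"
    by (rule has_sum_geometric_from_1[OF assms])
  also have "?this \<longleftrightarrow> ?thesis"
  proof (rule has_sum_reindex_bij_witness[of _ "\<lambda>Q. nat (snd Q 1)" ?column])
    fix Q
    assume Q: "Q \<in> ccp 1"
    obtain b t where bt: "Q = (b, t)"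
      by (cases Q)
    have b: "b i = 0" for i
      using Q by (cases "i = 1") (auto simp: bt ccp_def)
    have t: "i \<noteq> 1 \<Longrightarrow> t i = 0" "0 < t 1" for i
      using Q by (auto simp: bt ccp_def)
    have "Q = ?column (nat (t 1))"
      using b t by (auto simp: bt fun_eq_iff)
    then show "?column (nat (snd Q 1)) = Q"
      by (simp add: bt)
    show "nat (snd Q 1) \<in> {1..}"
      using t by (simp add: bt)
  next
    fix n :: nat
    assume "n \<in> {1..}"
    then show "?column n \<in> ccp 1"
      by (auto simp: ccp_def)
    have "{0..1::nat} = {0, 1}"
      by auto
    then show "polygon_weight 1 yt zt yb zb (?column n) = (yt 0 * yb 1) ^ n"
      by (simp add: polygon_weight_def Ntop_def Stop_def Nbot_def Sbot_def Let_def power_mult_distrib)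
  qed simp_all
  finally show ?thesis .
qed

lemma norm_polygon_weight:
  fixes yt zt yb zb :: "nat \<Rightarrow> 'a::real_normed_field"
  shows "norm (polygon_weight m yt zt yb zb P)
    = polygon_weight m (\<lambda>i. norm (yt i)) (\<lambda>i. norm (zt i)) (\<lambda>i. norm (yb i)) (\<lambda>i. norm (zb i)) P"
  by (simp add: polygon_weight_def prod_norm[symmetric] norm_mult norm_power)

lemma prefix_weight_nonneg:
  fixes yt zt yb zb :: "nat \<Rightarrow> real"
  assumes "\<And>i. 0 \<le> yt i" "\<And>i. 0 \<le> zt i" "\<And>i. 0 \<le> yb i" "\<And>i. 0 \<le> zb i"
  shows "0 \<le> prefix_weight m yt zt yb zb P"
  unfolding prefix_weight_def using assms by (intro prod_nonneg) auto

(* Only yb m \<le> 1 is required: the prefix weight of a polygon of width m is its weight with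
   yb m := 1, and this is what the induction hypothesis is applied to. *)
lemma summable_on_polygon_weight_nonneg:
  fixes yt zt yb zb :: "nat \<Rightarrow> real"
  assumes "1 \<le> m"
    and yt: "\<forall>i. 0 \<le> yt i \<and> yt i < 1" and zt: "\<forall>i. 0 \<le> zt i \<and> zt i < 1"
    and zb: "\<forall>i. 0 \<le> zb i \<and> zb i < 1"
    and "\<forall>i. 0 \<le> yb i \<and> yb i \<le> 1" "\<forall>i<m. yb i < 1"
  shows "polygon_weight m yt zt yb zb summable_on ccp m"
  using assms(1,5,6)
proof (induction m arbitrary: yb rule: dec_induct)
  case base
  have "norm (yt 0 * yb 1) < 1"
    using yt base.prems(1) by (intro norm_mult_less_one) auto
  then show ?case
    by (rule has_sum_imp_summable[OF has_sum_polygon_weight_1])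
next
  case (step m)
  let ?W = "prefix_weight m yt zt yb zb"
  let ?A = "SIGMA P:ccp m. admissible_columns (fst P m) (snd P m)"
  have W_nonneg: "0 \<le> ?W P" for P
    using yt zt zb step.prems(1) by (intro prefix_weight_nonneg) auto
  have "polygon_weight m yt zt (yb(m := 1)) zb = ?W"
    using step.hyps by (simp add: fun_eq_iff polygon_weight_fun_upd)
  moreover have "polygon_weight m yt zt (yb(m := 1)) zb summable_on ccp m"
    using step.prems by (intro step.IH) auto
  ultimately have W: "?W summable_on ccp m"
    by simp
  define r where "r = max (max (yt m) (zt m)) (max (yb m) (zb m))"
  have r: "0 \<le> r" "r < 1"
    using yt zt zb step.prems by (auto simp: r_def le_max_iff_disj)
  define majorant where "majorant = (\<lambda>(P, u, w). ?W P * (r ^ nat \<bar>u - fst P m\<bar> * r ^ nat \<bar>w - snd P m\<bar>))"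
  have "majorant summable_on (SIGMA P:ccp m. UNIV)"
  proof (rule summable_on_SigmaI)
    show "((\<lambda>x. majorant (P, x)) has_sum ?W P * ((1 + r) / (1 - r))\<^sup>2) UNIV" for P
      unfolding majorant_def
      using has_sum_cmult_right[OF has_sum_power_nat_abs_diff_pair[OF r], of "?W P"]
      by (simp add: case_prod_unfold)
    show "(\<lambda>P. ?W P * ((1 + r) / (1 - r))\<^sup>2) summable_on ccp m"
      by (rule summable_on_cmult_left[OF W])
    show "0 \<le> majorant (P, x)" for P x
      using W_nonneg r by (cases x) (auto simp: majorant_def)
  qed
  then have "majorant summable_on ?A"
    by (rule summable_on_subset) auto
  then have "(\<lambda>x. polygon_weight (Suc m) yt zt yb zb (add_column m x)) summable_on ?A"
  proof (rule summable_on_comparison_test)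
    fix x
    assume "x \<in> ?A"
    then obtain P u w where x: "x = (P, u, w)"
      by (metis prod.exhaust)
    let ?c = "column_weight (yt m) (zt m) (yb m) (zb m) (yb (Suc m)) (fst P m) (snd P m) (u, w)"
    have "0 \<le> ?c"
      using yt zt zb step.prems(1) by (simp add: column_weight_def)
    moreover have "norm ?c \<le> r ^ nat \<bar>u - fst P m\<bar> * r ^ nat \<bar>w - snd P m\<bar>"
      using yt zt zb step.prems(1) by (intro norm_column_weight_le) (auto simp: r_def)
    ultimately show "polygon_weight (Suc m) yt zt yb zb (add_column m x) \<le> majorant x"
      "0 \<le> polygon_weight (Suc m) yt zt yb zb (add_column m x)"
      using W_nonneg[of P] step.hyps
      by (auto simp: x majorant_def polygon_weight_add_column intro: mult_left_mono)
  qed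
  then show ?case
    by (simp add: summable_on_reindex_bij_betw[OF bij_betw_add_column[OF step.hyps(1)]])
qed

lemma summable_on_polygon_weight:
  fixes yt zt yb zb :: "nat \<Rightarrow> 'a::{real_normed_field, banach}"
  assumes "1 \<le> m" "\<forall>i. norm (yt i) < 1" "\<forall>i. norm (zt i) < 1" "\<forall>i. norm (yb i) < 1" "\<forall>i. norm (zb i) < 1"
  shows "polygon_weight m yt zt yb zb summable_on ccp m"
proof -
  have "polygon_weight m (\<lambda>i. norm (yt i)) (\<lambda>i. norm (zt i)) (\<lambda>i. norm (yb i)) (\<lambda>i. norm (zb i))
      summable_on ccp m"
    using assms by (intro summable_on_polygon_weight_nonneg) (auto intro: less_imp_le)
  then have "(\<lambda>P. norm (polygon_weight m yt zt yb zb P)) summable_on ccp m"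
    by (simp add: norm_polygon_weight)
  then show ?thesis
    by (rule abs_summable_summable)
qed

lemma has_sum_polygon_weight_Suc:
  fixes yt zt yb zb :: "nat \<Rightarrow> 'a::{real_normed_field, banach}"
  assumes m: "1 \<le> m"
    and norms: "\<forall>i. norm (yt i) < 1" "\<forall>i. norm (zt i) < 1" "\<forall>i. norm (yb i) < 1" "\<forall>i. norm (zb i) < 1"
    and distinct: "yb (Suc m) \<noteq> 0" "yb (Suc m) \<noteq> yb m" "yb (Suc m) \<noteq> zt m" "yb m \<noteq> zt m"
  defines "V s \<equiv> infsum (polygon_weight m yt zt (yb(m := s)) zb) (ccp m)"
  shows "(polygon_weight (Suc m) yt zt yb zb has_sum
           recursion_rhs (yt m) (zt m) (yb m) (zb m) (yb (Suc m)) (V (yb (Suc m))) (V (zt m)) (V (yb m)))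
         (ccp (Suc m))"
proof -
  let ?rhs = "recursion_rhs (yt m) (zt m) (yb m) (zb m) (yb (Suc m))"
  let ?W = "\<lambda>s. polygon_weight m yt zt (yb(m := s)) zb"
  have fiber: "((\<lambda>x. polygon_weight (Suc m) yt zt yb zb (add_column m (P, x))) has_sum
      ?rhs (?W (yb (Suc m)) P) (?W (zt m) P) (?W (yb m) P)) (admissible_columns (fst P m) (snd P m))"
    if "P \<in> ccp m" for P
  proof -
    have "fst P m < snd P m"
      using that m by (auto simp: ccp_def)
    with norms distinct have "(column_weight (yt m) (zt m) (yb m) (zb m) (yb (Suc m)) (fst P m) (snd P m) has_sum
        ?rhs (yb (Suc m) ^ nat (snd P m - fst P m)) (zt m ^ nat (snd P m - fst P m)) (yb m ^ nat (snd P m - fst P m)))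
        (admissible_columns (fst P m) (snd P m))"
      by (intro has_sum_column_weight) auto
    from has_sum_cmult_right[OF this, of "prefix_weight m yt zt yb zb P"] show ?thesis
      by (simp only: polygon_weight_add_column[OF m] polygon_weight_fun_upd[OF m] recursion_rhs_cmult)
  qed
  have has_sum_V: "(?W s has_sum V s) (ccp m)" if "norm s < 1" for s
    unfolding V_def using m norms that by (intro has_sum_infsum summable_on_polygon_weight) auto
  then have "((\<lambda>P. ?rhs (?W (yb (Suc m)) P) (?W (zt m) P) (?W (yb m) P)) has_sum
      ?rhs (V (yb (Suc m))) (V (zt m)) (V (yb m))) (ccp m)"
    by (intro has_sum_recursion_rhs has_sum_V) (use norms in auto)
  moreover have "(\<lambda>x. polygon_weight (Suc m) yt zt yb zb (add_column m x)) summable_on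
      (SIGMA P:ccp m. admissible_columns (fst P m) (snd P m))"
    using summable_on_polygon_weight[of "Suc m"] norms
    by (simp add: summable_on_reindex_bij_betw[OF bij_betw_add_column[OF m]])
  ultimately have "((\<lambda>x. polygon_weight (Suc m) yt zt yb zb (add_column m x)) has_sum
      ?rhs (V (yb (Suc m))) (V (zt m)) (V (yb m))) (SIGMA P:ccp m. admissible_columns (fst P m) (snd P m))"
    by (intro has_sum_SigmaI[OF fiber])
  then show ?thesis
    by (simp add: has_sum_reindex_bij_betw[OF bij_betw_add_column[OF m]])
qed

theorem proposition1:
  fixes yt zt yb zb :: "nat \<Rightarrow> complex"
  assumes "\<forall>i. norm (yt i) < 1" and "\<forall>i. norm (zt i) < 1"
      and "\<forall>i. norm (yb i) < 1" and "\<forall>i. norm (zb i) < 1"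
  shows "Vgf 1 yt zt yb zb = yt 0 * yb 1 / (1 - yt 0 * yb 1)
   \<and> (\<forall>m\<ge>1. yb (Suc m) \<noteq> 0 \<and> yb m \<noteq> zt m \<and> yb (Suc m) \<noteq> yb m \<and> yb (Suc m) \<noteq> zt m \<longrightarrow>
       Vgf (Suc m) yt zt yb zb =
         (1 - yb m * zb m) * (1 - yt m * zt m) * Vgf m yt zt (yb(m := yb (Suc m))) zb
           / ((1 - yb (Suc m) * yt m) * (1 - yb (Suc m) * zb m)
              * (1 - inverse (yb (Suc m)) * yb m) * (1 - inverse (yb (Suc m)) * zt m))
       + (zt m - yb (Suc m) * yb m * zb m) * Vgf m yt zt (yb(m := zt m)) zb
           / ((1 - yb (Suc m) * zb m) * (1 - inverse (yb (Suc m)) * zt m) * (yb m - zt m))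
       + (yb m - yb (Suc m) * yt m * zt m) * Vgf m yt zt (yb(m := yb m)) zb
           / ((1 - yb (Suc m) * yt m) * (1 - inverse (yb (Suc m)) * yb m) * (zt m - yb m)))"
proof -
  have "norm (yt 0 * yb 1) < 1"
    using assms(1,3) by (intro norm_mult_less_one) (auto intro: less_imp_le)
  then have base: "Vgf 1 yt zt yb zb = yt 0 * yb 1 / (1 - yt 0 * yb 1)"
    unfolding Vgf_eq_infsum_polygon_weight by (rule infsumI[OF has_sum_polygon_weight_1])
  have step: "Vgf (Suc m) yt zt yb zb = recursion_rhs (yt m) (zt m) (yb m) (zb m) (yb (Suc m))
      (Vgf m yt zt (yb(m := yb (Suc m))) zb) (Vgf m yt zt (yb(m := zt m)) zb) (Vgf m yt zt (yb(m := yb m)) zb)"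
    if "1 \<le> m" "yb (Suc m) \<noteq> 0 \<and> yb m \<noteq> zt m \<and> yb (Suc m) \<noteq> yb m \<and> yb (Suc m) \<noteq> zt m" for m
    unfolding Vgf_eq_infsum_polygon_weight
    by (rule infsumI, rule has_sum_polygon_weight_Suc) (use assms that in auto)
  show ?thesis
    using base step unfolding recursion_rhs_def by blast
qed

end
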